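(* Let $n\in\{2,3\}$, $s>\frac n2+1$, $(\mathbf u_0,\theta_0,\mathbf b_0)\in H^s_\sigma\times H^s\times H^s_\sigma$, let $T^\ast$ and the truncated solutions $(\mathbf u^R,\theta^R,\mathbf b^R)$ be as in the context, and let $(\mathbf u,\theta,\mathbf b)$ be their limit in $L^\infty([0,T^\ast];L^2_\sigma)\times L^\infty([0,T^\ast];L^2)\times L^\infty([0,T^\ast];L^2_\sigma)$ as $R\to\infty$. Then for any $s'$ with $\frac n2+1<s'<s$, $(\mathbf u^R,\theta^R,\mathbf b^R)\to(\mathbf u,\theta,\mathbf b)$ in $L^\infty([0,T^\ast];H^{s'}_\sigma(\mathbb R^n))\times L^\infty([0,T^\ast];H^{s'}(\mathbb R^n))\times L^\infty([0,T^\ast];H^{s'}_\sigma(\mathbb R^n))$.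
   Context: $\mathcal S_R$ is the Fourier truncation operator $\widehat{\mathcal S_R f}(\xi)=\mathbf 1_{B_R}(\xi)\widehat f(\xi)$, $B_R$ the ball of radius $R$ at $0$; $e_n$ the $n$-th unit vector. For $R>0$, $(\mathbf u^R,\theta^R,\mathbf b^R)$ solves the truncated system $\partial_t\mathbf u^R+\mathcal S_R[(\mathbf u^R\cdot\nabla)\mathbf u^R]+\nabla p^R=\theta^Re_n+\mathcal S_R[(\mathbf b^R\cdot\nabla)\mathbf b^R]$, $\partial_t\theta^R+\mathcal S_R[(\mathbf u^R\cdot\nabla)\theta^R]=\mathbf u^R\cdot e_n$, $\partial_t\mathbf b^R+\mathcal S_R[(\mathbf u^R\cdot\nabla)\mathbf b^R]=\mathcal S_R[(\mathbf b^R\cdot\nabla)\mathbf u^R]$, $\nabla\cdot\mathbf u^R=\nabla\cdot\mathbf b^R=0$, with data $(\mathcal S_R\mathbf u_0,\mathcal S_R\theta_0,\mathcal S_R\mathbf b_0)$. $T^\ast>0$ is a time, depending only on $s$ and the $H^s$ norms of the data, such that these solutions exist on $[0,T^\ast]$ with $H^s$ norms bounded uniformly in $R$ there; the family is then Cauchy in $L^\infty([0,T^\ast];L^2)$, which defines the limit. $H^s$ is the Sobolev space; $H^s_\sigma$, $L^2_\sigma$ the divergence-free vector fields in $H^s$, $L^2$. *)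

theory Defs
  imports "HOL-Analysis.Analysis"
begin

text \<open>All fields are represented on the Fourier side: a (real) function f on R^n
is represented by its Fourier transform, with the convention
fhat(xi) = integral of exp(-i x.xi) f(x) dx.  Thus products become
(2 pi)^(-n) times convolutions and derivatives d_j become multiplication by i xi_j.\<close>

definition hs_weight :: "real \<Rightarrow> ('n::euclidean_space) \<Rightarrow> real" where
  "hs_weight s \<xi> = (1 + (norm \<xi>)\<^sup>2) powr s"

text \<open>Sobolev H^s norm (via Fourier transform; s = 0 gives the L2 norm up to the
Plancherel constant).\<close>
definition hs_norm :: "real \<Rightarrow> (('n::euclidean_space) \<Rightarrow> 'b::real_normed_vector) \<Rightarrow> real" where
  "hs_norm s F = sqrt (\<integral>\<xi>. hs_weight s \<xi> * (norm (F \<xi>))\<^sup>2 \<partial>lborel)"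

text \<open>Hermitian symmetry of the Fourier transform = the function is real-valued.\<close>
definition real_sc :: "(real^'n \<Rightarrow> complex) \<Rightarrow> bool" where
  "real_sc F \<longleftrightarrow> (AE \<xi> in lborel. F (- \<xi>) = cnj (F \<xi>))"

definition real_vec :: "(real^'n \<Rightarrow> complex^'n) \<Rightarrow> bool" where
  "real_vec F \<longleftrightarrow> (AE \<xi> in lborel. F (- \<xi>) = (\<chi> j. cnj (F \<xi> $ j)))"

definition in_Hs_sc :: "real \<Rightarrow> (real^'n \<Rightarrow> complex) \<Rightarrow> bool" where
  "in_Hs_sc s F \<longleftrightarrow> F \<in> borel_measurable lborel
     \<and> integrable lborel (\<lambda>\<xi>. hs_weight s \<xi> * (norm (F \<xi>))\<^sup>2) \<and> real_sc F"

definition in_Hs_vec :: "real \<Rightarrow> (real^'n \<Rightarrow> complex^'n) \<Rightarrow> bool" where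
  "in_Hs_vec s F \<longleftrightarrow> F \<in> borel_measurable lborel
     \<and> integrable lborel (\<lambda>\<xi>. hs_weight s \<xi> * (norm (F \<xi>))\<^sup>2) \<and> real_vec F"

definition div_free :: "(real^'n \<Rightarrow> complex^'n) \<Rightarrow> bool" where
  "div_free F \<longleftrightarrow> (AE \<xi> in lborel. (\<Sum>j\<in>UNIV. complex_of_real (\<xi> $ j) * F \<xi> $ j) = 0)"

definition in_Hs_sigma :: "real \<Rightarrow> (real^'n \<Rightarrow> complex^'n) \<Rightarrow> bool" where
  "in_Hs_sigma s F \<longleftrightarrow> in_Hs_vec s F \<and> div_free F"

definition trunc :: "real \<Rightarrow> (real^'n \<Rightarrow> 'b::zero) \<Rightarrow> real^'n \<Rightarrow> 'b" where
  "trunc R F \<xi> = (if \<xi> \<in> ball 0 R then F \<xi> else 0)"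

text \<open>Fourier transform of (u . grad) g for a scalar g:
  (2 pi)^(-n) * integral over eta of sum_j uhat_j(xi - eta) (i eta_j) ghat(eta).\<close>
definition adv_sc :: "(real^'n \<Rightarrow> complex^'n) \<Rightarrow> (real^'n \<Rightarrow> complex) \<Rightarrow> real^'n \<Rightarrow> complex" where
  "adv_sc U G \<xi> = complex_of_real ((2 * pi) powr (- real CARD('n))) *
     (LINT \<eta>|lborel. (\<Sum>j\<in>UNIV. U (\<xi> - \<eta>) $ j * (\<i> * complex_of_real (\<eta> $ j)) * G \<eta>))"

definition adv_vec :: "(real^'n \<Rightarrow> complex^'n) \<Rightarrow> (real^'n \<Rightarrow> complex^'n) \<Rightarrow> real^'n \<Rightarrow> complex^'n" where
  "adv_vec U V \<xi> = (\<chi> i. adv_sc U (\<lambda>\<eta>. V \<eta> $ i) \<xi>)"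

definition grad_hat :: "(real^'n \<Rightarrow> complex) \<Rightarrow> real^'n \<Rightarrow> complex^'n" where
  "grad_hat P \<xi> = (\<chi> j. \<i> * complex_of_real (\<xi> $ j) * P \<xi>)"

end

theory Submission
  imports Defs
begin

text \<open>Splitting frequencies at \<open>1 + |\<xi>|\<^sup>2 = N\<close> bounds the weight of exponent \<open>s'\<close> by
  \<open>N powr s'\<close> times the \<open>L\<^sup>2\<close> weight plus \<open>N powr (s' - s)\<close> times the weight of exponent \<open>s\<close>.
  Hence a family bounded in \<open>H\<^sup>s\<close> and convergent in \<open>L\<^sup>2\<close> converges in \<open>H\<^sup>s'\<close>: choose \<open>N\<close> so
  large that the high frequencies are uniformly small by the \<open>H\<^sup>s\<close> bound, then make the low
  frequencies small by the \<open>L\<^sup>2\<close> convergence. That the limit obeys the same \<open>H\<^sup>s\<close> bound is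
  Fatou's lemma along an a.e. convergent subsequence.\<close>

definition Hs :: "real \<Rightarrow> ('a::euclidean_space \<Rightarrow> 'b::real_normed_vector) set" where
  "Hs s = {F. F \<in> borel_measurable lborel
     \<and> integrable lborel (\<lambda>\<xi>. hs_weight s \<xi> * (norm (F \<xi>))\<^sup>2)}"

lemma in_Hs_sc_iff: "in_Hs_sc s F \<longleftrightarrow> F \<in> Hs s \<and> real_sc F"
  unfolding in_Hs_sc_def Hs_def by auto

lemma in_Hs_sigma_iff: "in_Hs_sigma s F \<longleftrightarrow> F \<in> Hs s \<and> real_vec F \<and> div_free F"
  unfolding in_Hs_sigma_def in_Hs_vec_def Hs_def by auto

lemma hs_weight_base_pos: "1 + (norm \<xi>)\<^sup>2 > (0::real)"
  by (smt (verit) zero_le_power2)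

lemma hs_weight_pos: "hs_weight s \<xi> > 0"
  unfolding hs_weight_def using hs_weight_base_pos[of \<xi>] by simp

lemma hs_weight_nonneg: "hs_weight s \<xi> \<ge> 0"
  using hs_weight_pos less_imp_le by blast

lemma hs_weight_zero [simp]: "hs_weight 0 \<xi> = 1"
  unfolding hs_weight_def using hs_weight_base_pos[of \<xi>] by simp

lemma hs_weight_measurable [measurable]: "hs_weight s \<in> borel_measurable borel"
  unfolding hs_weight_def by measurable

lemma hs_weight_mono: "s' \<le> s \<Longrightarrow> hs_weight s' \<xi> \<le> hs_weight s \<xi>"
  unfolding hs_weight_def by (intro powr_mono) auto

lemma powr_le_split:
  fixes x N s s' :: real
  assumes "x \<ge> 1" "N \<ge> 1" "0 \<le> s'" "s' \<le> s"
  shows "x powr s' \<le> N powr s' + N powr (s' - s) * x powr s"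
proof (cases "x \<le> N")
  case True
  then have "x powr s' \<le> N powr s'" using assms by (intro powr_mono2) auto
  then show ?thesis by (smt (verit) powr_ge_zero mult_nonneg_nonneg)
next
  case False
  have "x powr s' = x powr (s' - s) * x powr s" by (simp add: powr_add[symmetric])
  also have "\<dots> \<le> N powr (s' - s) * x powr s"
    using assms False by (intro mult_right_mono powr_mono2') auto
  finally show ?thesis by (smt (verit) powr_ge_zero)
qed

lemma hs_weight_le_split:
  assumes "N \<ge> 1" "0 \<le> s'" "s' \<le> s"
  shows "hs_weight s' \<xi> \<le> N powr s' + N powr (s' - s) * hs_weight s \<xi>"
  unfolding hs_weight_def using assms by (intro powr_le_split) auto

lemma hs_integral_nonneg: "(\<integral>\<xi>. hs_weight s \<xi> * (norm (F \<xi>))\<^sup>2 \<partial>lborel) \<ge> 0"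
  by (intro integral_nonneg_AE AE_I2 mult_nonneg_nonneg hs_weight_nonneg zero_le_power2)

lemma hs_norm_nonneg: "hs_norm s F \<ge> 0"
  unfolding hs_norm_def using hs_integral_nonneg by simp

lemma hs_norm_sq: "(hs_norm s F)\<^sup>2 = (\<integral>\<xi>. hs_weight s \<xi> * (norm (F \<xi>))\<^sup>2 \<partial>lborel)"
  unfolding hs_norm_def using hs_integral_nonneg by simp

lemma Hs_antimono: "s' \<le> s \<Longrightarrow> F \<in> Hs s \<Longrightarrow> F \<in> Hs s'"
  unfolding Hs_def
  by (auto intro!: Bochner_Integration.integrable_bound[of _ "\<lambda>\<xi>. hs_weight s \<xi> * (norm (F \<xi>))\<^sup>2"]
        AE_I2 mult_right_mono hs_weight_mono simp: abs_mult hs_weight_nonneg)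

lemma norm_diff_sq_le: "(norm (a - b :: 'b::real_normed_vector))\<^sup>2 \<le> 2 * (norm a)\<^sup>2 + 2 * (norm b)\<^sup>2"
proof -
  have "(norm (a - b))\<^sup>2 \<le> (norm a + norm b)\<^sup>2"
    by (intro power_mono norm_triangle_ineq4) simp
  also have "\<dots> \<le> 2 * (norm a)\<^sup>2 + 2 * (norm b)\<^sup>2"
    by (smt (verit) sum_squares_bound power2_sum)
  finally show ?thesis .
qed

lemma Hs_diff:
  fixes F G :: "'a::euclidean_space \<Rightarrow> 'b::{real_normed_vector,second_countable_topology}"
  assumes F: "F \<in> Hs s" and G: "G \<in> Hs s"
  shows "(\<lambda>\<xi>. F \<xi> - G \<xi>) \<in> Hs s"
    and "(hs_norm s (\<lambda>\<xi>. F \<xi> - G \<xi>))\<^sup>2 \<le> 2 * (hs_norm s F)\<^sup>2 + 2 * (hs_norm s G)\<^sup>2"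
proof -
  let ?w = "\<lambda>H \<xi>. hs_weight s \<xi> * (norm (H \<xi>))\<^sup>2"
  have meas: "F \<in> borel_measurable lborel" "G \<in> borel_measurable lborel"
    and int: "integrable lborel (?w F)" "integrable lborel (?w G)"
    using F G unfolding Hs_def by auto
  have bound: "?w (\<lambda>\<xi>. F \<xi> - G \<xi>) \<xi> \<le> 2 * ?w F \<xi> + 2 * ?w G \<xi>" for \<xi>
  proof -
    have "?w (\<lambda>\<xi>. F \<xi> - G \<xi>) \<xi> \<le> hs_weight s \<xi> * (2 * (norm (F \<xi>))\<^sup>2 + 2 * (norm (G \<xi>))\<^sup>2)"
      by (intro mult_left_mono norm_diff_sq_le hs_weight_nonneg)
    then show ?thesis by (simp add: algebra_simps)
  qed
  have int_diff: "integrable lborel (?w (\<lambda>\<xi>. F \<xi> - G \<xi>))"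
  proof (rule Bochner_Integration.integrable_bound)
    show "integrable lborel (\<lambda>\<xi>. 2 * ?w F \<xi> + 2 * ?w G \<xi>)"
      using int by simp
    show "?w (\<lambda>\<xi>. F \<xi> - G \<xi>) \<in> borel_measurable lborel"
      using meas by measurable
    show "AE \<xi> in lborel. norm (?w (\<lambda>\<xi>. F \<xi> - G \<xi>) \<xi>) \<le> norm (2 * ?w F \<xi> + 2 * ?w G \<xi>)"
      using bound by (intro AE_I2) (simp add: hs_weight_nonneg)
  qed
  then show "(\<lambda>\<xi>. F \<xi> - G \<xi>) \<in> Hs s"
    using meas unfolding Hs_def by auto
  have "(\<integral>\<xi>. ?w (\<lambda>\<xi>. F \<xi> - G \<xi>) \<xi> \<partial>lborel) \<le> (\<integral>\<xi>. 2 * ?w F \<xi> + 2 * ?w G \<xi> \<partial>lborel)"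
    using int int_diff bound by (intro integral_mono) auto
  also have "\<dots> = 2 * (\<integral>\<xi>. ?w F \<xi> \<partial>lborel) + 2 * (\<integral>\<xi>. ?w G \<xi> \<partial>lborel)"
    using int by simp
  finally show "(hs_norm s (\<lambda>\<xi>. F \<xi> - G \<xi>))\<^sup>2 \<le> 2 * (hs_norm s F)\<^sup>2 + 2 * (hs_norm s G)\<^sup>2"
    by (simp add: hs_norm_sq)
qed

lemma hs_norm_interpolation:
  assumes F: "F \<in> Hs s" and N: "N \<ge> 1" and s': "0 \<le> s'" "s' \<le> s"
  shows "(hs_norm s' F)\<^sup>2 \<le> N powr s' * (hs_norm 0 F)\<^sup>2 + N powr (s' - s) * (hs_norm s F)\<^sup>2"
proof -
  let ?w = "\<lambda>r \<xi>. hs_weight r \<xi> * (norm (F \<xi>))\<^sup>2"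
  have int: "integrable lborel (?w r)" if "r \<le> s" for r
    using Hs_antimono[OF that F] unfolding Hs_def by auto
  have int0: "integrable lborel (?w 0)"
    using s' by (intro int) linarith
  have ints: "integrable lborel (?w s)" and ints': "integrable lborel (?w s')"
    using s' by (auto intro: int)
  have bound: "?w s' \<xi> \<le> N powr s' * ?w 0 \<xi> + N powr (s' - s) * ?w s \<xi>" for \<xi>
  proof -
    have "?w s' \<xi> \<le> (N powr s' + N powr (s' - s) * hs_weight s \<xi>) * (norm (F \<xi>))\<^sup>2"
      by (intro mult_right_mono hs_weight_le_split N s') simp
    then show ?thesis by (simp add: algebra_simps)
  qed
  have int_bound: "integrable lborel (\<lambda>\<xi>. N powr s' * ?w 0 \<xi> + N powr (s' - s) * ?w s \<xi>)"
    using int0 ints by (intro Bochner_Integration.integrable_add integrable_mult_right)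
  have "(\<integral>\<xi>. ?w s' \<xi> \<partial>lborel) \<le> (\<integral>\<xi>. N powr s' * ?w 0 \<xi> + N powr (s' - s) * ?w s \<xi> \<partial>lborel)"
    using ints' int_bound bound by (rule integral_mono)
  also have "\<dots> = N powr s' * (\<integral>\<xi>. ?w 0 \<xi> \<partial>lborel) + N powr (s' - s) * (\<integral>\<xi>. ?w s \<xi> \<partial>lborel)"
    using int0 ints by (simp only: Bochner_Integration.integral_add integrable_mult_right integral_mult_right_zero)
  finally show ?thesis by (simp only: hs_norm_sq)
qed

lemma weighted_sq_integral_le_of_L2_limit:
  fixes f :: "nat \<Rightarrow> 'a \<Rightarrow> 'b::real_normed_vector" and g :: "'a \<Rightarrow> 'b" and w :: "'a \<Rightarrow> real"
  assumes [measurable]: "\<And>n. f n \<in> borel_measurable M" "g \<in> borel_measurable M" "w \<in> borel_measurable M"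
    and w_nonneg: "\<And>x. w x \<ge> 0"
    and f_int: "\<And>n. integrable M (\<lambda>x. w x * (norm (f n x))\<^sup>2)"
    and f_bound: "\<And>n. (\<integral>x. w x * (norm (f n x))\<^sup>2 \<partial>M) \<le> C"
    and diff_int: "\<And>n. integrable M (\<lambda>x. (norm (f n x - g x))\<^sup>2)"
    and L2: "(\<lambda>n. \<integral>x. (norm (f n x - g x))\<^sup>2 \<partial>M) \<longlonglongrightarrow> 0"
  shows "integrable M (\<lambda>x. w x * (norm (g x))\<^sup>2) \<and> (\<integral>x. w x * (norm (g x))\<^sup>2 \<partial>M) \<le> C"
proof -
  have C: "C \<ge> 0"
    using f_bound[of 0] integral_nonneg_AE[of "\<lambda>x. w x * (norm (f 0 x))\<^sup>2" M] w_nonneg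
    by (smt (verit) AE_I2 mult_nonneg_nonneg zero_le_power2)
  have "\<exists>r::nat \<Rightarrow> nat. strict_mono r \<and> (AE x in M. (\<lambda>n. (norm (f (r n) x - g x))\<^sup>2) \<longlonglongrightarrow> 0)"
    by (rule tendsto_L1_AE_subseq) (use diff_int L2 in auto)
  then obtain r :: "nat \<Rightarrow> nat"
    where ae: "AE x in M. (\<lambda>n. (norm (f (r n) x - g x))\<^sup>2) \<longlonglongrightarrow> 0"
    by blast
  have ae_lim: "AE x in M. (\<lambda>n. ennreal (w x * (norm (f (r n) x))\<^sup>2)) \<longlonglongrightarrow> ennreal (w x * (norm (g x))\<^sup>2)"
  proof (rule AE_mp[OF ae], intro AE_I2 impI)
    fix x assume "(\<lambda>n. (norm (f (r n) x - g x))\<^sup>2) \<longlonglongrightarrow> 0"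
    then have "(\<lambda>n. sqrt ((norm (f (r n) x - g x))\<^sup>2)) \<longlonglongrightarrow> sqrt 0"
      by (intro tendsto_intros)
    then have "(\<lambda>n. f (r n) x) \<longlonglongrightarrow> g x"
      by (simp add: LIM_zero_iff tendsto_norm_zero_iff)
    then show "(\<lambda>n. ennreal (w x * (norm (f (r n) x))\<^sup>2)) \<longlonglongrightarrow> ennreal (w x * (norm (g x))\<^sup>2)"
      by (intro tendsto_ennrealI tendsto_intros)
  qed
  have "(\<integral>\<^sup>+x. ennreal (w x * (norm (g x))\<^sup>2) \<partial>M)
      = (\<integral>\<^sup>+x. liminf (\<lambda>n. ennreal (w x * (norm (f (r n) x))\<^sup>2)) \<partial>M)"
    by (rule nn_integral_cong_AE, rule AE_mp[OF ae_lim]) (simp add: lim_imp_Liminf)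
  also have "\<dots> \<le> liminf (\<lambda>n. \<integral>\<^sup>+x. ennreal (w x * (norm (f (r n) x))\<^sup>2) \<partial>M)"
    by (rule nn_integral_liminf) measurable
  also have "\<dots> \<le> liminf (\<lambda>n. ennreal C)"
  proof (rule Liminf_mono, intro always_eventually allI)
    fix n
    have "(\<integral>\<^sup>+x. ennreal (w x * (norm (f (r n) x))\<^sup>2) \<partial>M) = ennreal (\<integral>x. w x * (norm (f (r n) x))\<^sup>2 \<partial>M)"
      using f_int w_nonneg by (intro nn_integral_eq_integral) auto
    then show "(\<integral>\<^sup>+x. ennreal (w x * (norm (f (r n) x))\<^sup>2) \<partial>M) \<le> ennreal C"
      using f_bound by (simp add: ennreal_leI)
  qed
  finally have nn: "(\<integral>\<^sup>+x. ennreal (w x * (norm (g x))\<^sup>2) \<partial>M) \<le> ennreal C"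
    by (simp add: Liminf_const)
  have int: "integrable M (\<lambda>x. w x * (norm (g x))\<^sup>2)"
  proof (rule integrableI_bounded)
    show "(\<integral>\<^sup>+x. ennreal (norm (w x * (norm (g x))\<^sup>2)) \<partial>M) < \<infinity>"
      using nn w_nonneg by (simp add: le_less_trans)
  qed simp
  have "ennreal (\<integral>x. w x * (norm (g x))\<^sup>2 \<partial>M) \<le> ennreal C"
    using nn int w_nonneg by (subst nn_integral_eq_integral[symmetric]) auto
  with int C show ?thesis by (simp add: ennreal_le_iff)
qed

lemma Hs_limit_bounded:
  fixes f :: "real \<Rightarrow> 'a::euclidean_space \<Rightarrow> 'b::{real_normed_vector,second_countable_topology}"
  assumes s: "0 \<le> s"
    and f: "\<forall>\<^sub>F R in at_top. f R \<in> Hs s \<and> hs_norm s (f R) \<le> M"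
    and g: "g \<in> Hs 0"
    and conv: "((\<lambda>R. hs_norm 0 (\<lambda>\<xi>. f R \<xi> - g \<xi>)) \<longlongrightarrow> 0) at_top"
  shows "g \<in> Hs s \<and> hs_norm s g \<le> M"
proof -
  obtain R0 where R0: "\<And>R. R \<ge> R0 \<Longrightarrow> f R \<in> Hs s \<and> hs_norm s (f R) \<le> M"
    using f by (auto simp: eventually_at_top_linorder)
  define r where "r n = R0 + real n" for n
  have r: "filterlim r at_top sequentially"
    unfolding r_def by (rule filterlim_tendsto_add_at_top[OF tendsto_const filterlim_real_sequentially])
  have fr: "f (r n) \<in> Hs s" "hs_norm s (f (r n)) \<le> M" for n
    using R0[of "r n"] by (auto simp: r_def)
  have M: "M \<ge> 0"
    using fr(2)[of 0] hs_norm_nonneg[of s] by (rule order_trans[rotated])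
  have diff: "(\<lambda>\<xi>. f (r n) \<xi> - g \<xi>) \<in> Hs 0" for n
    using Hs_diff(1)[OF Hs_antimono[OF s fr(1)] g] .
  have "(\<lambda>n. (hs_norm 0 (\<lambda>\<xi>. f (r n) \<xi> - g \<xi>))\<^sup>2) \<longlonglongrightarrow> 0"
    using tendsto_power[OF filterlim_compose[OF conv r], of 2] by simp
  then have L2: "(\<lambda>n. \<integral>\<xi>. (norm (f (r n) \<xi> - g \<xi>))\<^sup>2 \<partial>lborel) \<longlonglongrightarrow> 0"
    by (simp add: hs_norm_sq)
  have f_bound: "(\<integral>\<xi>. hs_weight s \<xi> * (norm (f (r n) \<xi>))\<^sup>2 \<partial>lborel) \<le> M\<^sup>2" for n
    using power_mono[OF fr(2)[of n] hs_norm_nonneg, of 2] by (simp add: hs_norm_sq)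
  have g_int: "integrable lborel (\<lambda>\<xi>. hs_weight s \<xi> * (norm (g \<xi>))\<^sup>2)"
    and g_bound: "(\<integral>\<xi>. hs_weight s \<xi> * (norm (g \<xi>))\<^sup>2 \<partial>lborel) \<le> M\<^sup>2"
    using weighted_sq_integral_le_of_L2_limit[of "\<lambda>n. f (r n)" lborel g "hs_weight s", OF _ _ _
        hs_weight_nonneg _ f_bound _ L2] fr(1) g diff
    unfolding Hs_def by auto
  have "hs_norm s g \<le> sqrt (M\<^sup>2)"
    unfolding hs_norm_def using g_bound by (rule real_sqrt_le_mono)
  with g g_int M show ?thesis
    unfolding Hs_def by simp
qed

lemma Hs_uniform_convergence_interpolation:
  fixes h :: "'i \<Rightarrow> 'j \<Rightarrow> 'a::euclidean_space \<Rightarrow> 'b::real_normed_vector"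
  assumes s': "0 \<le> s'" "s' < s"
    and bound: "\<forall>\<^sub>F R in F. \<forall>t\<in>I. h R t \<in> Hs s \<and> hs_norm s (h R t) \<le> K"
    and L2: "\<And>\<delta>. \<delta> > 0 \<Longrightarrow> \<forall>\<^sub>F R in F. \<forall>t\<in>I. hs_norm 0 (h R t) \<le> \<delta>"
    and \<epsilon>: "\<epsilon> > 0"
  shows "\<forall>\<^sub>F R in F. \<forall>t\<in>I. hs_norm s' (h R t) \<le> \<epsilon>"
proof -
  have "((\<lambda>N::real. N powr (s' - s)) \<longlongrightarrow> 0) at_top"
    using s' by (intro tendsto_neg_powr filterlim_ident) simp
  then have "((\<lambda>N::real. N powr (s' - s) * K\<^sup>2) \<longlongrightarrow> 0 * K\<^sup>2) at_top"
    by (rule tendsto_mult_right)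
  then have "\<forall>\<^sub>F N in at_top. N powr (s' - s) * K\<^sup>2 < \<epsilon>\<^sup>2 / 2"
    using \<epsilon> by (intro order_tendstoD(2)) auto
  then have "\<forall>\<^sub>F N in at_top. N \<ge> 1 \<and> N powr (s' - s) * K\<^sup>2 < \<epsilon>\<^sup>2 / 2"
    using eventually_ge_at_top by (rule eventually_conj[rotated])
  then obtain N :: real where N: "N \<ge> 1" "N powr (s' - s) * K\<^sup>2 < \<epsilon>\<^sup>2 / 2"
    unfolding eventually_at_top_linorder by blast
  define \<delta> where "\<delta> = sqrt (\<epsilon>\<^sup>2 / (2 * N powr s'))"
  have "N powr s' > 0"
    using N(1) by simp
  then have \<delta>: "\<delta> > 0" "N powr s' * \<delta>\<^sup>2 = \<epsilon>\<^sup>2 / 2"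
    using \<epsilon> by (simp_all add: \<delta>_def)
  from L2[OF \<delta>(1)] bound show ?thesis
  proof eventually_elim
    case (elim R)
    show ?case
    proof
      fix t assume "t \<in> I"
      then have h: "h R t \<in> Hs s" "hs_norm s (h R t) \<le> K" "hs_norm 0 (h R t) \<le> \<delta>"
        using elim by blast+
      have "(hs_norm s' (h R t))\<^sup>2
          \<le> N powr s' * (hs_norm 0 (h R t))\<^sup>2 + N powr (s' - s) * (hs_norm s (h R t))\<^sup>2"
        using s' by (intro hs_norm_interpolation[OF h(1) N(1)]) simp_all
      also have "\<dots> \<le> N powr s' * \<delta>\<^sup>2 + N powr (s' - s) * K\<^sup>2"
        by (intro add_mono mult_left_mono power_mono hs_norm_nonneg h(2,3)) simp_all
      also have "\<dots> \<le> \<epsilon>\<^sup>2"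
        using \<delta>(2) N(2) by simp
      finally show "hs_norm s' (h R t) \<le> \<epsilon>"
        using \<epsilon> by (meson power2_le_imp_le less_imp_le)
    qed
  qed
qed

lemma Hs_convergence_of_bounded_L2_convergence:
  fixes F :: "real \<Rightarrow> 'i \<Rightarrow> 'a::euclidean_space \<Rightarrow> 'b::{real_normed_vector,second_countable_topology}"
    and G :: "'i \<Rightarrow> 'a \<Rightarrow> 'b"
  assumes s': "0 \<le> s'" "s' < s"
    and bounded: "\<And>R t. R > 0 \<Longrightarrow> t \<in> I \<Longrightarrow> F R t \<in> Hs s \<and> hs_norm s (F R t) \<le> M"
    and G: "\<And>t. t \<in> I \<Longrightarrow> G t \<in> Hs 0"
    and L2: "\<And>\<epsilon>. \<epsilon> > 0 \<Longrightarrow> \<forall>\<^sub>F R in at_top. \<forall>t\<in>I. hs_norm 0 (\<lambda>\<xi>. F R t \<xi> - G t \<xi>) \<le> \<epsilon>"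
  shows "(\<forall>t\<in>I. G t \<in> Hs s')
    \<and> (\<forall>\<epsilon>>0. \<forall>\<^sub>F R in at_top. \<forall>t\<in>I. hs_norm s' (\<lambda>\<xi>. F R t \<xi> - G t \<xi>) \<le> \<epsilon>)"
proof -
  have s: "0 \<le> s" using s' by linarith
  have limit: "G t \<in> Hs s \<and> hs_norm s (G t) \<le> M" if t: "t \<in> I" for t
  proof (rule Hs_limit_bounded[OF s _ G[OF t]])
    show "\<forall>\<^sub>F R in at_top. F R t \<in> Hs s \<and> hs_norm s (F R t) \<le> M"
      using eventually_gt_at_top[of 0] by eventually_elim (use bounded t in blast)
    show "((\<lambda>R. hs_norm 0 (\<lambda>\<xi>. F R t \<xi> - G t \<xi>)) \<longlongrightarrow> 0) at_top"
    proof (rule tendstoI)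
      fix e :: real assume "e > 0"
      then have "e / 2 > 0" by simp
      from L2[OF this] have "\<forall>\<^sub>F R in at_top. hs_norm 0 (\<lambda>\<xi>. F R t \<xi> - G t \<xi>) \<le> e / 2"
        by eventually_elim (use t in blast)
      then show "\<forall>\<^sub>F R in at_top. dist (hs_norm 0 (\<lambda>\<xi>. F R t \<xi> - G t \<xi>)) 0 < e"
        by eventually_elim (use \<open>e > 0\<close> in \<open>simp add: dist_real_def hs_norm_nonneg\<close>)
    qed
  qed
  have diff: "(\<lambda>\<xi>. F R t \<xi> - G t \<xi>) \<in> Hs s \<and> hs_norm s (\<lambda>\<xi>. F R t \<xi> - G t \<xi>) \<le> 2 * M"
    if "R > 0" "t \<in> I" for R t
  proof -
    have F: "F R t \<in> Hs s" "hs_norm s (F R t) \<le> M" and "G t \<in> Hs s" "hs_norm s (G t) \<le> M"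
      using bounded[OF that] limit[OF that(2)] by auto
    have "M \<ge> 0" using F(2) hs_norm_nonneg by (rule order_trans[rotated])
    have "(hs_norm s (\<lambda>\<xi>. F R t \<xi> - G t \<xi>))\<^sup>2 \<le> 2 * (hs_norm s (F R t))\<^sup>2 + 2 * (hs_norm s (G t))\<^sup>2"
      using F(1) \<open>G t \<in> Hs s\<close> by (rule Hs_diff(2))
    also have "\<dots> \<le> 2 * M\<^sup>2 + 2 * M\<^sup>2"
      using F(2) \<open>hs_norm s (G t) \<le> M\<close>
      by (intro add_mono mult_left_mono power_mono hs_norm_nonneg) simp_all
    also have "\<dots> = (2 * M)\<^sup>2" by (simp add: power2_eq_square)
    finally have "hs_norm s (\<lambda>\<xi>. F R t \<xi> - G t \<xi>) \<le> 2 * M"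
      by (rule power2_le_imp_le) (use \<open>M \<ge> 0\<close> in simp)
    with Hs_diff(1)[OF F(1) \<open>G t \<in> Hs s\<close>] show ?thesis by blast
  qed
  have "\<forall>\<^sub>F R in at_top. \<forall>t\<in>I. (\<lambda>\<xi>. F R t \<xi> - G t \<xi>) \<in> Hs s
      \<and> hs_norm s (\<lambda>\<xi>. F R t \<xi> - G t \<xi>) \<le> 2 * M"
    using eventually_gt_at_top[of 0] by eventually_elim (use diff in blast)
  note diff_bound = this
  show ?thesis
  proof (intro conjI ballI allI impI)
    fix t assume "t \<in> I"
    with limit s' show "G t \<in> Hs s'" by (meson Hs_antimono less_imp_le)
  next
    fix \<epsilon> :: real assume "\<epsilon> > 0"
    with s' diff_bound L2 show "\<forall>\<^sub>F R in at_top. \<forall>t\<in>I. hs_norm s' (\<lambda>\<xi>. F R t \<xi> - G t \<xi>) \<le> \<epsilon>"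
      by (rule Hs_uniform_convergence_interpolation)
  qed
qed

theorem proposition3p5:
  fixes s s' T :: real
    and k :: "'n::finite"
    and u0 b0 :: "real^'n \<Rightarrow> complex^'n" and \<theta>0 :: "real^'n \<Rightarrow> complex"
    and uR bR :: "real \<Rightarrow> real \<Rightarrow> real^'n \<Rightarrow> complex^'n"
    and \<theta>R pR :: "real \<Rightarrow> real \<Rightarrow> real^'n \<Rightarrow> complex"
    and u b :: "real \<Rightarrow> real^'n \<Rightarrow> complex^'n" and \<theta> :: "real \<Rightarrow> real^'n \<Rightarrow> complex"
  assumes dim: "CARD('n) = 2 \<or> CARD('n) = 3"
    and s: "s > real CARD('n) / 2 + 1"
    and data: "in_Hs_sigma s u0" "in_Hs_sc s \<theta>0" "in_Hs_sigma s b0"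
    and T: "T > 0"
    and reg: "\<And>R t. R > 0 \<Longrightarrow> t \<in> {0..T} \<Longrightarrow>
       in_Hs_sigma s (uR R t) \<and> in_Hs_sc s (\<theta>R R t) \<and> in_Hs_sigma s (bR R t) \<and> real_sc (pR R t)"
    and bound: "\<exists>M. \<forall>R>0. \<forall>t\<in>{0..T}.
       hs_norm s (uR R t) \<le> M \<and> hs_norm s (\<theta>R R t) \<le> M \<and> hs_norm s (bR R t) \<le> M"
    and init: "\<And>R. R > 0 \<Longrightarrow>
       uR R 0 = trunc R u0 \<and> \<theta>R R 0 = trunc R \<theta>0 \<and> bR R 0 = trunc R b0"
    and eqs: "\<And>R. R > 0 \<Longrightarrow> AE \<xi> in lborel. \<forall>t\<in>{0..T}.
       ((\<lambda>\<tau>. uR R \<tau> \<xi>) has_vector_derivative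
          (- trunc R (adv_vec (uR R t) (uR R t)) \<xi> - grad_hat (pR R t) \<xi>
           + axis k (\<theta>R R t \<xi>) + trunc R (adv_vec (bR R t) (bR R t)) \<xi>)) (at t within {0..T})
     \<and> ((\<lambda>\<tau>. \<theta>R R \<tau> \<xi>) has_vector_derivative
          (- trunc R (adv_sc (uR R t) (\<theta>R R t)) \<xi> + uR R t \<xi> $ k)) (at t within {0..T})
     \<and> ((\<lambda>\<tau>. bR R \<tau> \<xi>) has_vector_derivative
          (- trunc R (adv_vec (uR R t) (bR R t)) \<xi> + trunc R (adv_vec (bR R t) (uR R t)) \<xi>))
          (at t within {0..T})"
    and lim_reg: "\<And>t. t \<in> {0..T} \<Longrightarrow>
       in_Hs_sigma 0 (u t) \<and> in_Hs_sc 0 (\<theta> t) \<and> in_Hs_sigma 0 (b t)"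
    and lim: "\<And>\<epsilon>. \<epsilon> > 0 \<Longrightarrow> \<forall>\<^sub>F R in at_top. \<forall>t\<in>{0..T}.
       hs_norm 0 (\<lambda>\<xi>. uR R t \<xi> - u t \<xi>) \<le> \<epsilon> \<and> hs_norm 0 (\<lambda>\<xi>. \<theta>R R t \<xi> - \<theta> t \<xi>) \<le> \<epsilon>
       \<and> hs_norm 0 (\<lambda>\<xi>. bR R t \<xi> - b t \<xi>) \<le> \<epsilon>"
    and s': "real CARD('n) / 2 + 1 < s'" "s' < s"
  shows "(\<forall>t\<in>{0..T}. in_Hs_sigma s' (u t) \<and> in_Hs_sc s' (\<theta> t) \<and> in_Hs_sigma s' (b t))
    \<and> (\<forall>\<epsilon>>0. \<forall>\<^sub>F R in at_top. \<forall>t\<in>{0..T}.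
       hs_norm s' (\<lambda>\<xi>. uR R t \<xi> - u t \<xi>) \<le> \<epsilon> \<and> hs_norm s' (\<lambda>\<xi>. \<theta>R R t \<xi> - \<theta> t \<xi>) \<le> \<epsilon>
       \<and> hs_norm s' (\<lambda>\<xi>. bR R t \<xi> - b t \<xi>) \<le> \<epsilon>)"
proof -
  have s'_pos: "0 \<le> s'" using s'(1) by (smt (verit) divide_nonneg_nonneg of_nat_0_le_iff)
  obtain M where M: "\<forall>R>0. \<forall>t\<in>{0..T}.
       hs_norm s (uR R t) \<le> M \<and> hs_norm s (\<theta>R R t) \<le> M \<and> hs_norm s (bR R t) \<le> M"
    using bound by blast
  note convergence = Hs_convergence_of_bounded_L2_convergence[OF s'_pos s'(2), where I = "{0..T}" and M = M]
  have u: "(\<forall>t\<in>{0..T}. u t \<in> Hs s')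
      \<and> (\<forall>\<epsilon>>0. \<forall>\<^sub>F R in at_top. \<forall>t\<in>{0..T}. hs_norm s' (\<lambda>\<xi>. uR R t \<xi> - u t \<xi>) \<le> \<epsilon>)"
    using reg M lim_reg by (intro convergence; auto simp: in_Hs_sigma_iff intro: eventually_mono[OF lim])
  have \<theta>: "(\<forall>t\<in>{0..T}. \<theta> t \<in> Hs s')
      \<and> (\<forall>\<epsilon>>0. \<forall>\<^sub>F R in at_top. \<forall>t\<in>{0..T}. hs_norm s' (\<lambda>\<xi>. \<theta>R R t \<xi> - \<theta> t \<xi>) \<le> \<epsilon>)"
    using reg M lim_reg by (intro convergence; auto simp: in_Hs_sc_iff intro: eventually_mono[OF lim])
  have b: "(\<forall>t\<in>{0..T}. b t \<in> Hs s')
      \<and> (\<forall>\<epsilon>>0. \<forall>\<^sub>F R in at_top. \<forall>t\<in>{0..T}. hs_norm s' (\<lambda>\<xi>. bR R t \<xi> - b t \<xi>) \<le> \<epsilon>)"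
    using reg M lim_reg by (intro convergence; auto simp: in_Hs_sigma_iff intro: eventually_mono[OF lim])
  show ?thesis
  proof (intro conjI ballI allI impI)
    fix t assume "t \<in> {0..T}"
    then show "in_Hs_sigma s' (u t)" "in_Hs_sc s' (\<theta> t)" "in_Hs_sigma s' (b t)"
      using u \<theta> b lim_reg by (auto simp: in_Hs_sigma_iff in_Hs_sc_iff)
  next
    fix \<epsilon> :: real assume "\<epsilon> > 0"
    with u \<theta> b show "\<forall>\<^sub>F R in at_top. \<forall>t\<in>{0..T}.
       hs_norm s' (\<lambda>\<xi>. uR R t \<xi> - u t \<xi>) \<le> \<epsilon> \<and> hs_norm s' (\<lambda>\<xi>. \<theta>R R t \<xi> - \<theta> t \<xi>) \<le> \<epsilon>
       \<and> hs_norm s' (\<lambda>\<xi>. bR R t \<xi> - b t \<xi>) \<le> \<epsilon>"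
      by (auto intro: eventually_elim2[OF eventually_conj])
  qed
qed

end
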